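(* Let $w_1,\dots,w_l\in\mathbb{C}$, $z_1,\dots,z_l\in\mathbb{T}$ and $R>0$. There exists $b\in\mathbb{C}$ with $|b|\le 2lR$ such that $|w_m+bz_m|\ge R$ for all $m=1,\dots,l$.
   Context: $\mathbb{T}$ denotes the unit circle in $\mathbb{C}$. *)

theory Defs
  imports "HOL-Analysis.Analysis"
begin

end

theory Submission
  imports Defs
begin

text \<open>Try the \<open>l + 1\<close> candidates \<open>b = 2 R k\<close>, \<open>k = 0, \<dots>, l\<close>, which are \<open>2 R\<close> apart.
  Since \<open>|z\<^sub>m| = 1\<close>, two values of \<open>b\<close> with \<open>|w\<^sub>m + b z\<^sub>m| < R\<close> are less than \<open>2 R\<close> apart,
  so each index \<open>m\<close> rules out at most one candidate, and by pigeonhole some candidate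
  survives all \<open>l\<close> indices.\<close>

lemma norm_diff_lt_if_both_near:
  fixes a b w z :: "'a::real_normed_div_algebra"
  assumes "norm z = 1" "norm (w + a * z) < R" "norm (w + b * z) < R"
  shows "norm (a - b) < 2 * R"
proof -
  have "norm (a - b) = norm ((w + a * z) - (w + b * z))"
    using assms(1) by (simp add: norm_mult algebra_simps flip: left_diff_distrib)
  also have "\<dots> \<le> norm (w + a * z) + norm (w + b * z)"
    by (rule norm_triangle_ineq4)
  also have "\<dots> < 2 * R"
    using assms(2,3) by simp
  finally show ?thesis .
qed

lemma ex_survivor_pigeonhole:
  assumes "finite M" and "card M < card K"
    and unique: "\<And>m i j. m \<in> M \<Longrightarrow> i \<in> K \<Longrightarrow> j \<in> K \<Longrightarrow> bad m i \<Longrightarrow> bad m j \<Longrightarrow> i = j"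
  shows "\<exists>k\<in>K. \<forall>m\<in>M. \<not> bad m k"
proof (rule ccontr)
  assume "\<not> ?thesis"
  then have covered: "K \<subseteq> (\<Union>m\<in>M. {k\<in>K. bad m k})"
    by blast
  have finite_K: "finite K"
    using assms(2) card.infinite by fastforce
  have "card K \<le> card (\<Union>m\<in>M. {k\<in>K. bad m k})"
    using covered finite_K assms(1) by (intro card_mono) auto
  also have "\<dots> \<le> (\<Sum>m\<in>M. card {k\<in>K. bad m k})"
    using assms(1) by (rule card_UN_le)
  also have "\<dots> \<le> (\<Sum>m\<in>M. 1)"
    using unique finite_K by (intro sum_mono) (auto simp: card_le_Suc0_iff_eq)
  finally show False
    using assms(2) by simp
qed

theorem lemma4p14:
  fixes l :: nat and w z :: "nat \<Rightarrow> complex" and R :: real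
  assumes "\<forall>m\<in>{1..l}. norm (z m) = 1"
    and "R > 0"
  shows "\<exists>b::complex. norm b \<le> 2 * real l * R \<and>
           (\<forall>m\<in>{1..l}. norm (w m + b * z m) \<ge> R)"
proof -
  define b where "b k = complex_of_real (2 * R * real k)" for k
  have "\<exists>k\<in>{0..l}. \<forall>m\<in>{1..l}. \<not> norm (w m + b k * z m) < R"
  proof (rule ex_survivor_pigeonhole)
    fix m i j
    assume "m \<in> {1..l}" "norm (w m + b i * z m) < R" "norm (w m + b j * z m) < R"
    then have "norm (b i - b j) < 2 * R"
      using assms(1) by (intro norm_diff_lt_if_both_near) auto
    moreover have "norm (b i - b j) = 2 * R * \<bar>real i - real j\<bar>"
      using assms(2) unfolding b_def
      by (simp only: norm_of_real flip: of_real_diff right_diff_distrib) (simp add: abs_mult)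
    ultimately have "\<bar>real i - real j\<bar> < 1"
      using assms(2) by simp
    then show "i = j"
      by linarith
  qed auto
  then obtain k where "k \<le> l" "\<forall>m\<in>{1..l}. norm (w m + b k * z m) \<ge> R"
    by (auto simp: not_less)
  moreover have "norm (b k) \<le> 2 * real l * R"
    unfolding b_def norm_of_real using \<open>k \<le> l\<close> assms(2) by simp
  ultimately show ?thesis
    by blast
qed

end
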